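(* For every integer $n\ge4$ there exist a connected graph $\mathcal G$ with $n$ nodes, two distinct non-adjacent nodes $i^*,j^*$ of $\mathcal G$, and an arrival distribution $\alpha$ satisfying the stability condition for $\mathcal G$, such that $\mathbb E[\overline Q]>\mathbb E[Q]$, where $\overline{\mathcal G}$ is $\mathcal G$ with the edge $\{i^*,j^*\}$ added.
   Context: A matching model consists of a finite connected simple graph $\mathcal G=(\mathcal V,\xi)$ and an arrival distribution $\alpha$ on $\mathcal V$ (all $\alpha_i>0$). $\mathcal E(i)$ is the neighbour set of $i$, $\mathcal E(V)=\bigcup_{i\in V}\mathcal E(i)$, $|\alpha_V|=\sum_{i\in V}\alpha_i$. Under FCFS, an arriving item of class $i$ is matched with the oldest present item whose class lies in $\mathcal E(i)$ (both leave), otherwise it waits. An independent set is a non-empty set of pairwise non-adjacent nodes. The stability condition is $|\alpha_{\mathcal I}|<|\alpha_{\mathcal E(\mathcal I)}|$ for every independent set $\mathcal I$ of $\mathcal G$; under it the FCFS chain is positive recurrent and $\mathbb E[Q]$ denotes the stationary mean number of items; $\mathbb E[\overline Q]$ is the analogous quantity for $\overline{\mathcal G}$ with the same $\alpha$. *)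

theory Defs
  imports "HOL-Analysis.Analysis"
begin

definition simple_graph :: "nat set \<Rightarrow> (nat \<Rightarrow> nat \<Rightarrow> bool) \<Rightarrow> bool" where
  "simple_graph V E \<longleftrightarrow> finite V \<and> (\<forall>x y. E x y \<longrightarrow> x \<in> V \<and> y \<in> V)
     \<and> (\<forall>x y. E x y \<longrightarrow> E y x) \<and> (\<forall>x. \<not> E x x)"

definition connected_graph :: "nat set \<Rightarrow> (nat \<Rightarrow> nat \<Rightarrow> bool) \<Rightarrow> bool" where
  "connected_graph V E \<longleftrightarrow> simple_graph V E \<and> V \<noteq> {} \<and> (\<forall>x\<in>V. \<forall>y\<in>V. E\<^sup>*\<^sup>* x y)"

definition nbrs :: "nat set \<Rightarrow> (nat \<Rightarrow> nat \<Rightarrow> bool) \<Rightarrow> nat set \<Rightarrow> nat set" where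
  "nbrs V E I = {j \<in> V. \<exists>i\<in>I. E i j}"

definition independent_set :: "nat set \<Rightarrow> (nat \<Rightarrow> nat \<Rightarrow> bool) \<Rightarrow> nat set \<Rightarrow> bool" where
  "independent_set V E I \<longleftrightarrow> I \<noteq> {} \<and> I \<subseteq> V \<and> (\<forall>i\<in>I. \<forall>j\<in>I. \<not> E i j)"

definition arrival_dist :: "nat set \<Rightarrow> (nat \<Rightarrow> real) \<Rightarrow> bool" where
  "arrival_dist V \<alpha> \<longleftrightarrow> (\<forall>i\<in>V. \<alpha> i > 0) \<and> sum \<alpha> V = 1"

definition stable :: "nat set \<Rightarrow> (nat \<Rightarrow> nat \<Rightarrow> bool) \<Rightarrow> (nat \<Rightarrow> real) \<Rightarrow> bool" where
  "stable V E \<alpha> \<longleftrightarrow> (\<forall>I. independent_set V E I \<longrightarrow> sum \<alpha> I < sum \<alpha> (nbrs V E I))"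

text \<open>A state is the list of classes of the items present, oldest first.
  An arriving item of class i is matched with the oldest present item whose class is
  a neighbour of i (both leave); otherwise it is appended at the end.\<close>
definition fcfs_step :: "(nat \<Rightarrow> nat \<Rightarrow> bool) \<Rightarrow> nat list \<Rightarrow> nat \<Rightarrow> nat list" where
  "fcfs_step E w i =
     (if \<exists>k<length w. E i (w ! k)
      then (let k = (LEAST k. k < length w \<and> E i (w ! k)) in take k w @ drop (Suc k) w)
      else w @ [i])"

inductive_set fcfs_reach :: "nat set \<Rightarrow> (nat \<Rightarrow> nat \<Rightarrow> bool) \<Rightarrow> nat list set"
  for V E where
  empty: "[] \<in> fcfs_reach V E"
| step: "w \<in> fcfs_reach V E \<Longrightarrow> i \<in> V \<Longrightarrow> fcfs_step E w i \<in> fcfs_reach V E"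

definition fcfs_trans :: "nat set \<Rightarrow> (nat \<Rightarrow> nat \<Rightarrow> bool) \<Rightarrow> (nat \<Rightarrow> real) \<Rightarrow> nat list \<Rightarrow> nat list \<Rightarrow> real" where
  "fcfs_trans V E \<alpha> w w' = (\<Sum>i\<in>V. if fcfs_step E w i = w' then \<alpha> i else 0)"

definition fcfs_stationary :: "nat set \<Rightarrow> (nat \<Rightarrow> nat \<Rightarrow> bool) \<Rightarrow> (nat \<Rightarrow> real) \<Rightarrow> (nat list \<Rightarrow> real) \<Rightarrow> bool" where
  "fcfs_stationary V E \<alpha> \<pi> \<longleftrightarrow>
     (\<forall>w. \<pi> w \<ge> 0) \<and> (\<forall>w. w \<notin> fcfs_reach V E \<longrightarrow> \<pi> w = 0) \<and> (\<pi> has_sum 1) UNIV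
     \<and> (\<forall>w'. ((\<lambda>w. \<pi> w * fcfs_trans V E \<alpha> w w') has_sum \<pi> w') UNIV)"

definition mean_items :: "(nat list \<Rightarrow> real) \<Rightarrow> ennreal" where
  "mean_items \<pi> = (\<Sum>\<^sub>\<infinity>w. ennreal (\<pi> w * real (length w)))"

definition add_edge :: "(nat \<Rightarrow> nat \<Rightarrow> bool) \<Rightarrow> nat \<Rightarrow> nat \<Rightarrow> nat \<Rightarrow> nat \<Rightarrow> bool" where
  "add_edge E a b = (\<lambda>x y. E x y \<or> (x = a \<and> y = b) \<or> (x = b \<and> y = a))"

end

theory Submission
  imports Defs
begin

text \<open>
  In a complete multipartite graph two waiting items of different parts would have been matched,
  so under FCFS the queue always consists of items of a single part. The FCFS chain then has a
  product-form stationary distribution: a queue \<open>w\<close> of items of part \<open>l\<close> has weight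
  \<open>\<Prod>i\<in>w. \<alpha>\<^sub>i / (1 - m\<^sub>l)\<close>, where \<open>m\<^sub>l\<close> is the arrival mass of part \<open>l\<close> (an arrival of class \<open>i\<close>
  extends the queue, an arrival outside part \<open>l\<close>, of mass \<open>1 - m\<^sub>l\<close>, removes its head).
  With \<open>\<rho>\<^sub>l = m\<^sub>l / (1 - m\<^sub>l)\<close>, geometric series give the mean queue length
  \<open>(\<Sum>\<^sub>l \<rho>\<^sub>l / (1 - \<rho>\<^sub>l)\<^sup>2) / (1 + \<Sum>\<^sub>l \<rho>\<^sub>l / (1 - \<rho>\<^sub>l))\<close>, and stability means \<open>m\<^sub>l < 1/2\<close>.

  Take the parts \<open>{0, 1}\<close>, \<open>{2}\<close>, \<open>{3, \<dots>, n - 1}\<close> with masses \<open>1/5, 2/5, 2/5\<close>. Adding the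
  edge \<open>{0, 1}\<close> splits the first part into two parts of mass \<open>1/10\<close> and raises the mean queue
  length from \<open>7/3\<close> to \<open>131/56\<close>.
\<close>

section \<open>Sums over words\<close>

lemma sum_prod_list_lists_length:
  fixes r :: "'a \<Rightarrow> 'b::comm_semiring_1"
  assumes "finite S"
  shows "(\<Sum>w\<in>{w. set w \<subseteq> S \<and> length w = k}. prod_list (map r w)) = sum r S ^ k"
proof (induction k)
  case 0
  have "{w. set w \<subseteq> S \<and> length w = 0} = {[]}" by auto
  then show ?case by simp
next
  case (Suc k)
  let ?W = "{w. set w \<subseteq> S \<and> length w = k}"
  have words: "{w. set w \<subseteq> S \<and> length w = Suc k} = (\<lambda>(x, w). x # w) ` (S \<times> ?W)"
    by (auto simp: length_Suc_conv image_iff)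
  have inj: "inj_on (\<lambda>(x, w). x # w) (S \<times> ?W)"
    by (auto simp: inj_on_def)
  have "(\<Sum>w\<in>{w. set w \<subseteq> S \<and> length w = Suc k}. prod_list (map r w))
      = (\<Sum>x\<in>S. \<Sum>w\<in>?W. r x * prod_list (map r w))"
    unfolding words sum.reindex[OF inj] sum.cartesian_product by (simp add: case_prod_beta)
  also have "\<dots> = sum r S * (\<Sum>w\<in>?W. prod_list (map r w))"
    by (rule sum_product[symmetric])
  finally show ?case using Suc by simp
qed

lemma has_sum_prod_list_lists:
  fixes r :: "'a \<Rightarrow> real"
  assumes S: "finite S" "\<And>x. x \<in> S \<Longrightarrow> r x \<ge> 0"
    and g: "\<And>k. k \<in> K \<Longrightarrow> g k \<ge> 0" "((\<lambda>k. g k * sum r S ^ k) has_sum T) K"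
  shows "((\<lambda>w. prod_list (map r w) * g (length w)) has_sum T) {w. set w \<subseteq> S \<and> length w \<in> K}"
proof -
  define W where "W k = {w. set w \<subseteq> S \<and> length w = k}" for k
  define f where "f w = prod_list (map r w) * g (length w)" for w
  have layer: "((\<lambda>w. f (snd (k, w))) has_sum g k * sum r S ^ k) (W k)" for k
  proof (rule has_sum_finiteI)
    show "finite (W k)"
      unfolding W_def using finite_lists_length_eq[OF S(1)] by simp
    have "(\<Sum>w\<in>W k. f (snd (k, w))) = (\<Sum>w\<in>W k. prod_list (map r w)) * g k"
      unfolding sum_distrib_right by (rule sum.cong) (auto simp: f_def W_def)
    also have "\<dots> = g k * sum r S ^ k"
      using sum_prod_list_lists_length[OF S(1), where r=r and k=k] by (simp add: W_def)
    finally show "g k * sum r S ^ k = (\<Sum>w\<in>W k. f (snd (k, w)))" by simp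
  qed
  have "prod_list (map r w) \<ge> 0" if "set w \<subseteq> S" for w
    using that by (induction w) (auto intro!: mult_nonneg_nonneg S(2))
  then have "(\<lambda>p. f (snd p)) summable_on Sigma K W"
    using layer has_sum_imp_summable[OF g(2)] g(1)
    by (intro summable_on_SigmaI) (auto simp: f_def W_def)
  then have "((\<lambda>p. f (snd p)) has_sum T) (Sigma K W)"
    using layer g(2) by (intro has_sum_SigmaI)
  moreover have "inj_on snd (Sigma K W)"
    by (auto simp: inj_on_def W_def)
  ultimately have "(f has_sum T) (snd ` Sigma K W)"
    by (simp add: has_sum_reindex comp_def)
  moreover have "snd ` Sigma K W = {w. set w \<subseteq> S \<and> length w \<in> K}"
    by (auto simp: W_def image_iff)
  ultimately show ?thesis by (simp add: f_def[abs_def])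
qed

lemma has_sum_weighted_geometric_from_1:
  fixes q :: real
  assumes "0 \<le> q" "q < 1"
  shows "((\<lambda>k. real k * q ^ k) has_sum q / (1 - q)\<^sup>2) {1..}"
proof -
  have "(\<lambda>k. real (Suc k) * q ^ k) sums (1 / (1 - q)\<^sup>2)"
    using geometric_deriv_sums[of q] assms by simp
  then have "(\<lambda>k. q * (real (Suc k) * q ^ k)) sums (q * (1 / (1 - q)\<^sup>2))"
    by (rule sums_mult)
  then have "(\<lambda>k. real (Suc k) * q ^ Suc k) sums (q / (1 - q)\<^sup>2)"
    by (simp add: algebra_simps)
  then have "((\<lambda>k. real (Suc k) * q ^ Suc k) has_sum q / (1 - q)\<^sup>2) UNIV"
    by (rule sums_nonneg_imp_has_sum) (use assms in simp)
  also have "?this \<longleftrightarrow> ?thesis"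
    by (intro has_sum_reindex_bij_witness[of _ "\<lambda>k. k - 1" Suc]) auto
  finally show ?thesis .
qed

lemma infsum_ennreal_eq:
  fixes f :: "'a \<Rightarrow> real"
  assumes "(f has_sum s) A" "\<And>x. f x \<ge> 0"
  shows "(\<Sum>\<^sub>\<infinity>x\<in>A. ennreal (f x)) = ennreal s"
proof -
  have "((ennreal \<circ> f) has_sum ennreal s) A"
  proof (rule has_sum_comm_additive_general[OF _ _ assms(1)])
    show "sum (ennreal \<circ> f) F = ennreal (sum f F)" for F
      using assms(2) by simp
    show "ennreal \<midarrow>s\<rightarrow> ennreal s"
      by (intro tendsto_ennrealI tendsto_ident_at)
  qed
  then show ?thesis by (simp add: infsumI comp_def)
qed

section \<open>FCFS matching on complete multipartite graphs\<close>

locale complete_multipartite_model =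
  fixes V :: "nat set" and part :: "nat \<Rightarrow> nat" and \<alpha> :: "nat \<Rightarrow> real"
  assumes finite_V: "finite V"
    and arrivals: "arrival_dist V \<alpha>"
    and small_parts: "\<And>l. sum \<alpha> {i\<in>V. part i = l} < 1/2"
begin

definition edge :: "nat \<Rightarrow> nat \<Rightarrow> bool" where
  "edge x y \<longleftrightarrow> x \<in> V \<and> y \<in> V \<and> part x \<noteq> part y"

definition part_set :: "nat \<Rightarrow> nat set" where
  "part_set l = {i\<in>V. part i = l}"

definition part_mass :: "nat \<Rightarrow> real" where
  "part_mass l = sum \<alpha> (part_set l)"

lemma alpha_pos: "i \<in> V \<Longrightarrow> \<alpha> i > 0"
  using arrivals by (simp add: arrival_dist_def)

lemma mem_part_set [simp]: "i \<in> part_set l \<longleftrightarrow> i \<in> V \<and> part i = l"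
  by (simp add: part_set_def)

lemma finite_part_set: "finite (part_set l)"
  using finite_V by (simp add: part_set_def)

lemma part_mass_nonneg: "part_mass l \<ge> 0"
  unfolding part_mass_def using alpha_pos by (intro sum_nonneg) (auto intro: less_imp_le)

lemma part_mass_less_half: "part_mass l < 1/2"
  using small_parts by (simp add: part_mass_def part_set_def)

lemma sum_outside_part: "sum \<alpha> {i\<in>V. part i \<noteq> l} = 1 - part_mass l"
proof -
  have "sum \<alpha> V = sum \<alpha> (V \<inter> part_set l) + sum \<alpha> (V - part_set l)"
    using finite_V by (rule sum.Int_Diff)
  moreover have "V \<inter> part_set l = part_set l" "V - part_set l = {i\<in>V. part i \<noteq> l}"
    by auto
  ultimately show ?thesis
    using arrivals by (simp add: arrival_dist_def part_mass_def)
qed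

lemma stable: "stable V edge \<alpha>"
  unfolding stable_def
proof (intro allI impI)
  fix I assume ind: "independent_set V edge I"
  then obtain i where i: "i \<in> I"
    unfolding independent_set_def by blast
  have sub: "I \<subseteq> part_set (part i)"
    using ind i unfolding independent_set_def edge_def by fastforce
  have nbrs: "nbrs V edge I = {j\<in>V. part j \<noteq> part i}"
    using sub i ind unfolding nbrs_def edge_def independent_set_def by fastforce
  have "sum \<alpha> I \<le> part_mass (part i)"
    unfolding part_mass_def using sub finite_part_set alpha_pos
    by (intro sum_mono2) (auto intro: less_imp_le)
  also have "\<dots> < 1 - part_mass (part i)"
    using part_mass_less_half[of "part i"] by simp
  finally show "sum \<alpha> I < sum \<alpha> (nbrs V edge I)"
    by (simp add: nbrs sum_outside_part)
qed

lemma connected_graph: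
  assumes "a \<in> V" "b \<in> V" "part a \<noteq> part b"
  shows "connected_graph V edge"
  unfolding connected_graph_def simple_graph_def
proof (intro conjI allI impI ballI)
  show "finite V" "V \<noteq> {}"
    using finite_V assms by auto
  fix x y
  show "edge x y \<Longrightarrow> x \<in> V" "edge x y \<Longrightarrow> y \<in> V" "edge x y \<Longrightarrow> edge y x" "\<not> edge x x"
    by (auto simp: edge_def)
next
  fix x y assume xy: "x \<in> V" "y \<in> V"
  obtain z where z: "z \<in> V" "part z \<noteq> part x"
    using assms by metis
  show "edge\<^sup>*\<^sup>* x y"
  proof (cases "part x = part y")
    case True
    then have "edge x z" "edge z y"
      using z xy by (auto simp: edge_def)
    then show ?thesis
      by (meson rtranclp.rtrancl_into_rtrancl rtranclp.rtrancl_refl)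
  qed (use xy in \<open>auto simp: edge_def\<close>)
qed

definition single_part :: "nat list \<Rightarrow> bool" where
  "single_part w \<longleftrightarrow> (\<exists>l. set w \<subseteq> part_set l)"

lemma single_part_Nil [simp]: "single_part []"
  by (simp add: single_part_def)

lemma single_part_Cons: "single_part (a # w) \<longleftrightarrow> a \<in> V \<and> set w \<subseteq> part_set (part a)"
  by (auto simp: single_part_def)

lemma single_part_hd: "single_part w \<Longrightarrow> w \<noteq> [] \<Longrightarrow> set w \<subseteq> part_set (part (hd w))"
  by (cases w) (auto simp: single_part_Cons)

lemma single_part_snoc:
  "single_part (w @ [i]) \<longleftrightarrow> single_part w \<and> i \<in> V \<and> (w \<noteq> [] \<longrightarrow> part i = part (hd w))"
  by (cases w) (auto simp: single_part_Cons)

lemma single_part_tl: "single_part w \<Longrightarrow> single_part (tl w)"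
  by (cases w) (auto simp: single_part_def)

lemma fcfs_step_single_part:
  assumes "single_part w" "i \<in> V"
  shows "fcfs_step edge w i = (if w \<noteq> [] \<and> part i \<noteq> part (hd w) then tl w else w @ [i])"
proof (cases "w \<noteq> [] \<and> part i \<noteq> part (hd w)")
  case True
  then have "hd w \<in> V"
    using single_part_hd[OF assms(1)] hd_in_set by fastforce
  then have "edge i (w ! 0)"
    using True assms(2) by (simp add: edge_def flip: hd_conv_nth)
  moreover from this have "(LEAST k. k < length w \<and> edge i (w ! k)) = 0"
    using True by (intro Least_eq_0) simp
  ultimately show ?thesis
    using True by (auto simp: fcfs_step_def drop_Suc)
next
  case False
  have "\<not> edge i (w ! k)" if "k < length w" for k
  proof -
    have "w ! k \<in> part_set (part (hd w))"
      using nth_mem[OF that] single_part_hd[OF assms(1)] that by fastforce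
    then show ?thesis
      using False that by (auto simp: edge_def)
  qed
  then show ?thesis
    using False by (auto simp: fcfs_step_def)
qed

lemma single_part_fcfs_step: "single_part w \<Longrightarrow> i \<in> V \<Longrightarrow> single_part (fcfs_step edge w i)"
  by (auto simp: fcfs_step_single_part single_part_tl single_part_snoc)

lemma single_part_fcfs_reach: "single_part w \<Longrightarrow> w \<in> fcfs_reach V edge"
proof (induction w rule: rev_induct)
  case Nil
  show ?case by (rule fcfs_reach.empty)
next
  case (snoc i w)
  then have "single_part w" "i \<in> V" "fcfs_step edge w i = w @ [i]"
    by (auto simp: single_part_snoc fcfs_step_single_part)
  then show ?case
    using fcfs_reach.step[OF snoc.IH] by metis
qed

lemma fcfs_step_single_part_eq_Nil:
  assumes "single_part w" "i \<in> V" "fcfs_step edge w i = []"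
  shows "\<exists>j\<in>V. w = [j]"
proof -
  have "w \<noteq> [] \<and> tl w = []"
    using assms(3) by (auto simp: fcfs_step_single_part[OF assms(1,2)] split: if_splits)
  then obtain j where "w = [j]"
    by (cases w) auto
  then show ?thesis
    using assms(1) by (auto simp: single_part_Cons)
qed

lemma fcfs_step_single_part_eq_snoc:
  assumes "single_part w" "i \<in> V" "fcfs_step edge w i = u @ [i']"
  shows "w = u \<or> (\<exists>j\<in>part_set (part i'). w = j # u @ [i'])"
proof (cases "w \<noteq> [] \<and> part i \<noteq> part (hd w)")
  case True
  then have "tl w = u @ [i']"
    using assms(3) by (simp add: fcfs_step_single_part[OF assms(1,2)])
  then have w: "w = hd w # u @ [i']"
    using True by (metis list.collapse)
  have "set w \<subseteq> part_set (part (hd w))"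
    using single_part_hd[OF assms(1)] True by blast
  then have "hd w \<in> part_set (part i')"
    by (subst (asm) w) auto
  then show ?thesis
    using w by blast
next
  case False
  have "fcfs_step edge w i = w @ [i]"
    unfolding fcfs_step_single_part[OF assms(1,2)] using False by (rule if_not_P)
  then have "w @ [i] = u @ [i']"
    using assms(3) by simp
  then show ?thesis
    by simp
qed

lemma fcfs_trans_eq_0:
  assumes "\<And>i. i \<in> V \<Longrightarrow> fcfs_step edge w i \<noteq> w'"
  shows "fcfs_trans V edge \<alpha> w w' = 0"
  unfolding fcfs_trans_def using assms by (intro sum.neutral) auto

lemma fcfs_trans_tl:
  assumes "single_part w" "w \<noteq> []"
  shows "fcfs_trans V edge \<alpha> w (tl w) = 1 - part_mass (part (hd w))"
proof -
  have "fcfs_trans V edge \<alpha> w (tl w) = (\<Sum>i\<in>V. if part i \<noteq> part (hd w) then \<alpha> i else 0)"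
    unfolding fcfs_trans_def using assms
    by (intro sum.cong) (auto simp: fcfs_step_single_part dest: arg_cong[of _ _ length])
  also have "\<dots> = 1 - part_mass (part (hd w))"
    using finite_V by (simp add: sum.inter_filter[symmetric] sum_outside_part)
  finally show ?thesis .
qed

lemma fcfs_trans_snoc:
  assumes "single_part (w @ [i])"
  shows "fcfs_trans V edge \<alpha> w (w @ [i]) = \<alpha> i"
proof -
  have "fcfs_trans V edge \<alpha> w (w @ [i]) = (\<Sum>j\<in>V. if j = i then \<alpha> j else 0)"
    unfolding fcfs_trans_def using assms
    by (intro sum.cong) (auto simp: single_part_snoc fcfs_step_single_part dest: arg_cong[of _ _ length])
  also have "\<dots> = \<alpha> i"
    using assms finite_V by (simp add: single_part_snoc)
  finally show ?thesis .
qed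

definition scaled_rate :: "nat \<Rightarrow> real" where
  "scaled_rate i = \<alpha> i / (1 - part_mass (part i))"

definition word_weight :: "nat list \<Rightarrow> real" where
  "word_weight w = prod_list (map scaled_rate w)"

definition load :: "nat \<Rightarrow> real" where
  "load l = part_mass l / (1 - part_mass l)"

definition norm_const :: real where
  "norm_const = 1 + (\<Sum>l\<in>part ` V. load l / (1 - load l))"

definition stat_dist :: "nat list \<Rightarrow> real" where
  "stat_dist w = (if single_part w then word_weight w / norm_const else 0)"

definition mean_length :: real where
  "mean_length = (\<Sum>l\<in>part ` V. load l / (1 - load l)\<^sup>2) / norm_const"

lemma scaled_rate_mult: "scaled_rate i * (1 - part_mass (part i)) = \<alpha> i"
  using part_mass_less_half[of "part i"] by (simp add: scaled_rate_def)

lemma scaled_rate_nonneg: "i \<in> V \<Longrightarrow> scaled_rate i \<ge> 0"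
  using alpha_pos[of i] part_mass_less_half[of "part i"] by (simp add: scaled_rate_def)

lemma sum_scaled_rate: "sum scaled_rate (part_set l) = load l"
proof -
  have "sum scaled_rate (part_set l) = (\<Sum>i\<in>part_set l. \<alpha> i / (1 - part_mass l))"
    by (intro sum.cong) (auto simp: scaled_rate_def)
  then show ?thesis
    by (simp add: load_def part_mass_def sum_divide_distrib)
qed

lemma load_nonneg: "load l \<ge> 0"
  using part_mass_nonneg[of l] part_mass_less_half[of l] by (simp add: load_def)

lemma load_less_one: "load l < 1"
  using part_mass_nonneg[of l] part_mass_less_half[of l] by (simp add: load_def field_simps)

lemma norm_const_pos: "norm_const > 0"
proof -
  have "load l / (1 - load l) \<ge> 0" for l
    using load_nonneg[of l] load_less_one[of l] by simp
  then show ?thesis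
    unfolding norm_const_def by (smt (verit) sum_nonneg)
qed

lemma stat_dist_nonneg: "stat_dist w \<ge> 0"
proof -
  have "set w \<subseteq> V \<Longrightarrow> word_weight w \<ge> 0"
    unfolding word_weight_def by (induction w) (auto intro!: mult_nonneg_nonneg scaled_rate_nonneg)
  moreover have "single_part w \<Longrightarrow> set w \<subseteq> V"
    by (auto simp: single_part_def)
  ultimately show ?thesis
    using norm_const_pos by (simp add: stat_dist_def)
qed

lemma stat_dist_flow_Cons:
  assumes "single_part (j # w)"
  shows "stat_dist (j # w) * fcfs_trans V edge \<alpha> (j # w) w = \<alpha> j * stat_dist w"
  using fcfs_trans_tl[OF assms] single_part_tl[OF assms] scaled_rate_mult[of j] assms
  by (simp add: stat_dist_def word_weight_def)

lemma stat_dist_flow_snoc: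
  assumes "single_part (w @ [i])"
  shows "stat_dist w * fcfs_trans V edge \<alpha> w (w @ [i]) = (1 - part_mass (part i)) * stat_dist (w @ [i])"
  using fcfs_trans_snoc[OF assms] scaled_rate_mult[of i] assms
  by (simp add: stat_dist_def word_weight_def single_part_snoc mult_ac)

lemma stat_dist_balance_Nil: "((\<lambda>w. stat_dist w * fcfs_trans V edge \<alpha> w []) has_sum stat_dist []) UNIV"
proof (rule has_sum_finite_neutralI[where B = "(\<lambda>j. [j]) ` V"])
  show "finite ((\<lambda>j. [j]) ` V)" "(\<lambda>j. [j]) ` V \<subseteq> UNIV"
    using finite_V by simp_all
  show "stat_dist w * fcfs_trans V edge \<alpha> w [] = 0" if "w \<in> UNIV - (\<lambda>j. [j]) ` V" for w
  proof (cases "single_part w")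
    case True
    then have "fcfs_step edge w i \<noteq> []" if "i \<in> V" for i
      using fcfs_step_single_part_eq_Nil[OF True that] \<open>w \<in> UNIV - (\<lambda>j. [j]) ` V\<close> by blast
    then show ?thesis
      by (simp add: fcfs_trans_eq_0)
  qed (simp add: stat_dist_def)
  have "(\<Sum>w\<in>(\<lambda>j. [j]) ` V. stat_dist w * fcfs_trans V edge \<alpha> w [])
      = (\<Sum>j\<in>V. stat_dist [j] * fcfs_trans V edge \<alpha> [j] [])"
    by (simp add: sum.reindex inj_on_def)
  also have "\<dots> = (\<Sum>j\<in>V. \<alpha> j) * stat_dist []"
    unfolding sum_distrib_right using stat_dist_flow_Cons[of _ "[]"]
    by (intro sum.cong) (simp_all add: single_part_Cons)
  also have "\<dots> = stat_dist []"
    using arrivals by (simp add: arrival_dist_def)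
  finally show "stat_dist [] = (\<Sum>w\<in>(\<lambda>j. [j]) ` V. stat_dist w * fcfs_trans V edge \<alpha> w [])"
    by simp
qed

text \<open>The state \<open>u @ [i]\<close> is entered from \<open>u\<close> when \<open>i\<close> arrives, and from \<open>j # u @ [i]\<close>, for \<open>j\<close>
  in the part of \<open>i\<close>, when an item of another part arrives and is matched with the head \<open>j\<close>.\<close>

lemma stat_dist_balance_snoc:
  assumes snoc: "single_part (u @ [i])"
  shows "((\<lambda>w. stat_dist w * fcfs_trans V edge \<alpha> w (u @ [i])) has_sum stat_dist (u @ [i])) UNIV"
proof -
  define w' where "w' = u @ [i]"
  define f where "f w = stat_dist w * fcfs_trans V edge \<alpha> w w'" for w
  define P where "P = part_set (part i)"
  have "set w' \<subseteq> part_set (part (hd w'))"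
    using single_part_hd[OF snoc] by (simp add: w'_def)
  then have Cons: "single_part (j # w')" if "j \<in> P" for j
    using that by (auto simp: single_part_Cons P_def w'_def)
  have "(f has_sum stat_dist w') UNIV"
  proof (rule has_sum_finite_neutralI[where B = "insert u ((\<lambda>j. j # w') ` P)"])
    show "finite (insert u ((\<lambda>j. j # w') ` P))" "insert u ((\<lambda>j. j # w') ` P) \<subseteq> UNIV"
      by (simp_all add: P_def finite_part_set)
    show "f w = 0" if "w \<in> UNIV - insert u ((\<lambda>j. j # w') ` P)" for w
    proof (cases "single_part w")
      case True
      then have "fcfs_step edge w k \<noteq> w'" if "k \<in> V" for k
        using fcfs_step_single_part_eq_snoc[OF True that] \<open>w \<in> UNIV - _\<close> by (auto simp: w'_def P_def)
      then show ?thesis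
        by (simp add: f_def fcfs_trans_eq_0)
    qed (simp add: f_def stat_dist_def)
    have "u \<notin> (\<lambda>j. j # w') ` P"
      by (auto simp: w'_def)
    then have "(\<Sum>w\<in>insert u ((\<lambda>j. j # w') ` P). f w) = f u + (\<Sum>j\<in>P. f (j # w'))"
      by (simp add: sum.reindex inj_on_def P_def finite_part_set)
    also have "\<dots> = (1 - part_mass (part i)) * stat_dist w' + (\<Sum>j\<in>P. \<alpha> j) * stat_dist w'"
      unfolding sum_distrib_right using stat_dist_flow_snoc[OF snoc] stat_dist_flow_Cons[OF Cons]
      by (simp add: f_def w'_def)
    also have "(\<Sum>j\<in>P. \<alpha> j) = part_mass (part i)"
      by (simp add: P_def part_mass_def)
    finally show "stat_dist w' = (\<Sum>w\<in>insert u ((\<lambda>j. j # w') ` P). f w)"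
      by (simp add: algebra_simps)
  qed
  then show ?thesis
    by (simp add: f_def[abs_def] w'_def)
qed

lemma stat_dist_balance: "((\<lambda>w. stat_dist w * fcfs_trans V edge \<alpha> w w') has_sum stat_dist w') UNIV"
proof (cases "single_part w'")
  case True
  then show ?thesis
    by (cases w' rule: rev_exhaust) (simp_all add: stat_dist_balance_Nil stat_dist_balance_snoc)
next
  case False
  have "stat_dist w * fcfs_trans V edge \<alpha> w w' = 0" for w
    using False single_part_fcfs_step[of w] fcfs_trans_eq_0[of w w']
    by (cases "single_part w") (auto simp: stat_dist_def)
  then have "(\<lambda>w. stat_dist w * fcfs_trans V edge \<alpha> w w') = (\<lambda>_. 0)"
    by (rule ext)
  then show ?thesis
    using False by (simp add: stat_dist_def)
qed

lemma has_sum_single_part_words: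
  fixes g :: "nat \<Rightarrow> real"
  assumes "\<And>k. g k \<ge> 0" "\<And>l. ((\<lambda>k. g k * load l ^ k) has_sum T l) {1..}"
  shows "((\<lambda>w. word_weight w * g (length w)) has_sum g 0 + sum T (part ` V)) {w. single_part w}"
proof -
  define P where "P l = {w. set w \<subseteq> part_set l \<and> length w \<in> {1..}}" for l
  have part_words: "((\<lambda>w. word_weight w * g (length w)) has_sum T l) (P l)" for l
    unfolding P_def word_weight_def using finite_part_set scaled_rate_nonneg assms
    by (intro has_sum_prod_list_lists) (auto simp: sum_scaled_rate)
  have "P l \<inter> P l' = {}" if "l \<noteq> l'" for l l'
  proof -
    have "hd w \<in> part_set l" if "w \<in> P l" for w l
      using that hd_in_set[of w] by (cases w) (auto simp: P_def)
    then show ?thesis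
      using \<open>l \<noteq> l'\<close> by (metis disjoint_iff mem_part_set)
  qed
  then have parts: "((\<lambda>w. word_weight w * g (length w)) has_sum sum T (part ` V)) (\<Union>l\<in>part ` V. P l)"
    using finite_V part_words by (intro sum_has_sum) auto
  have "[] \<notin> (\<Union>l\<in>part ` V. P l)"
    by (auto simp: P_def)
  from has_sum_insert[OF this parts]
  have "((\<lambda>w. word_weight w * g (length w)) has_sum word_weight [] * g 0 + sum T (part ` V))
      (insert [] (\<Union>l\<in>part ` V. P l))"
    by simp
  moreover have "insert [] (\<Union>l\<in>part ` V. P l) = {w. single_part w}"
  proof (intro equalityI subsetI)
    fix w assume "w \<in> {w. single_part w}"
    show "w \<in> insert [] (\<Union>l\<in>part ` V. P l)"
    proof (cases "w = []")
      case False
      then have "set w \<subseteq> part_set (part (hd w))"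
        using single_part_hd[of w] \<open>w \<in> {w. single_part w}\<close> by simp
      moreover from this have "hd w \<in> V"
        using False by (metis hd_in_set mem_part_set subsetD)
      ultimately show ?thesis
        using False by (auto simp: P_def Suc_le_eq)
    qed simp
  qed (auto simp: P_def single_part_def)
  ultimately show ?thesis
    by (simp add: word_weight_def)
qed

lemma has_sum_stat_dist_weighted:
  fixes g :: "nat \<Rightarrow> real"
  assumes "\<And>k. g k \<ge> 0" "\<And>l. ((\<lambda>k. g k * load l ^ k) has_sum T l) {1..}"
  shows "((\<lambda>w. stat_dist w * g (length w)) has_sum (g 0 + sum T (part ` V)) / norm_const) UNIV"
proof -
  have "((\<lambda>w. word_weight w * g (length w) / norm_const) has_sum (g 0 + sum T (part ` V)) / norm_const)
      {w. single_part w}"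
    by (rule has_sum_divide_const[OF has_sum_single_part_words[OF assms]])
  then show ?thesis
    by (rule has_sum_cong_neutral[THEN iffD1, rotated -1]) (auto simp: stat_dist_def)
qed

lemma has_sum_stat_dist: "(stat_dist has_sum 1) UNIV"
proof -
  have "((\<lambda>k. 1 * load l ^ k) has_sum load l / (1 - load l)) {1..}" for l
    using has_sum_geometric_from_1[of "load l"] load_nonneg[of l] load_less_one[of l] by simp
  from has_sum_stat_dist_weighted[of "\<lambda>_. 1", OF _ this] show ?thesis
    using norm_const_pos by (simp add: norm_const_def)
qed

lemma has_sum_stat_dist_length: "((\<lambda>w. stat_dist w * real (length w)) has_sum mean_length) UNIV"
  using has_sum_stat_dist_weighted[of real, OF _ has_sum_weighted_geometric_from_1[OF load_nonneg load_less_one]]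
  by (simp add: mean_length_def)

theorem fcfs_stationary_stat_dist: "fcfs_stationary V edge \<alpha> stat_dist"
  unfolding fcfs_stationary_def
  using stat_dist_nonneg has_sum_stat_dist stat_dist_balance single_part_fcfs_reach by (auto simp: stat_dist_def)

lemma mean_items_stat_dist: "mean_items stat_dist = ennreal mean_length"
  unfolding mean_items_def
  by (rule infsum_ennreal_eq[OF has_sum_stat_dist_length]) (simp add: stat_dist_nonneg)

end

section \<open>The example\<close>

definition example_part :: "nat \<Rightarrow> nat" where
  "example_part i = (if i \<le> 1 then 0 else if i = 2 then 1 else 2)"

definition example_part_split :: "nat \<Rightarrow> nat" where
  "example_part_split i = (if i = 0 then 3 else example_part i)"

definition example_arrivals :: "nat \<Rightarrow> nat \<Rightarrow> real" where
  "example_arrivals n i = (if i \<le> 1 then 1/10 else if i = 2 then 2/5 else 2/5 / real (n - 3))"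

lemma example_arrivals_simps [simp]:
  "example_arrivals n 0 = 1/10" "example_arrivals n (Suc 0) = 1/10" "example_arrivals n 2 = 2/5"
  by (simp_all add: example_arrivals_def)

context
  fixes n :: nat
  assumes n: "n \<ge> 4"
begin

lemma sum_example_arrivals_tail: "sum (example_arrivals n) {3..<n} = 2/5"
proof -
  define c where "c = real (n - 3)"
  have "c \<noteq> 0"
    using n by (simp add: c_def)
  have "sum (example_arrivals n) {3..<n} = (\<Sum>i\<in>{3..<n}. 2/5 / c)"
    by (intro sum.cong) (auto simp: example_arrivals_def c_def)
  also have "\<dots> = c * (2/5 / c)"
    by (simp only: sum_constant card_atLeastLessThan c_def)
  also have "\<dots> = 2/5"
    using \<open>c \<noteq> 0\<close> by simp
  finally show ?thesis .
qed

lemma example_arrival_dist: "arrival_dist {..<n} (example_arrivals n)"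
proof -
  have "{..<n} = {0, 1, 2} \<union> {3..<n}"
    using n by auto
  then have "sum (example_arrivals n) {..<n} = 1"
    by (simp add: sum.union_disjoint sum_example_arrivals_tail)
  then show ?thesis
    using n by (simp add: arrival_dist_def example_arrivals_def)
qed

lemma example_part_mass:
  "sum (example_arrivals n) {i\<in>{..<n}. example_part i = l} =
     (if l = 0 then 1/5 else if l \<in> {1, 2} then 2/5 else 0)"
proof -
  have "{i\<in>{..<n}. example_part i = l} =
      (if l = 0 then {0, 1} else if l = 1 then {2} else if l = 2 then {3..<n} else {})"
    using n by (auto simp: example_part_def)
  then show ?thesis
    by (simp add: sum_example_arrivals_tail)
qed

lemma example_part_split_mass:
  "sum (example_arrivals n) {i\<in>{..<n}. example_part_split i = l} =
     (if l \<in> {0, 3} then 1/10 else if l \<in> {1, 2} then 2/5 else 0)"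
proof -
  have "{i\<in>{..<n}. example_part_split i = l} =
      (if l = 3 then {0} else if l = 0 then {1} else if l = 1 then {2} else if l = 2 then {3..<n} else {})"
    using n by (auto simp: example_part_split_def example_part_def)
  then show ?thesis
    by (simp add: sum_example_arrivals_tail)
qed

lemma example_model: "complete_multipartite_model {..<n} example_part (example_arrivals n)"
proof
  show "sum (example_arrivals n) {i\<in>{..<n}. example_part i = l} < 1/2" for l
    unfolding example_part_mass by simp
qed (simp_all add: example_arrival_dist)

lemma example_split_model: "complete_multipartite_model {..<n} example_part_split (example_arrivals n)"
proof
  show "sum (example_arrivals n) {i\<in>{..<n}. example_part_split i = l} < 1/2" for l
    unfolding example_part_split_mass by simp
qed (simp_all add: example_arrival_dist)

interpretation G: complete_multipartite_model "{..<n}" example_part "example_arrivals n"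
  by (rule example_model)

interpretation H: complete_multipartite_model "{..<n}" example_part_split "example_arrivals n"
  by (rule example_split_model)

lemma example_mean_length: "G.mean_length = 7/3"
proof -
  have "G.part_mass l = (if l = 0 then 1/5 else if l \<in> {1, 2} then 2/5 else 0)" for l
    unfolding G.part_mass_def G.part_set_def by (rule example_part_mass)
  then have masses: "G.part_mass 0 = 1/5" "G.part_mass (Suc 0) = 2/5" "G.part_mass 2 = 2/5"
    by simp_all
  have "example_part ` {..<n} = {0, 1, 2}"
  proof
    show "example_part ` {..<n} \<subseteq> {0, 1, 2}"
      by (auto simp: example_part_def)
    have "example_part 0 = 0" "example_part 2 = 1" "example_part 3 = 2" "{0, 2, 3} \<subseteq> {..<n}"
      using n by (auto simp: example_part_def)
    then show "{0, 1, 2} \<subseteq> example_part ` {..<n}"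
      by (metis empty_subsetI insert_subset rev_image_eqI)
  qed
  then show ?thesis
    unfolding G.mean_length_def G.norm_const_def G.load_def
    by (simp add: masses power2_eq_square)
qed

lemma example_split_mean_length: "H.mean_length = 131/56"
proof -
  have "H.part_mass l = (if l \<in> {0, 3} then 1/10 else if l \<in> {1, 2} then 2/5 else 0)" for l
    unfolding H.part_mass_def H.part_set_def by (rule example_part_split_mass)
  then have masses: "H.part_mass 0 = 1/10" "H.part_mass (Suc 0) = 2/5" "H.part_mass 2 = 2/5"
      "H.part_mass 3 = 1/10"
    by simp_all
  have "example_part_split ` {..<n} = {0, 1, 2, 3}"
  proof
    show "example_part_split ` {..<n} \<subseteq> {0, 1, 2, 3}"
      by (auto simp: example_part_split_def example_part_def)
    have "example_part_split 1 = 0" "example_part_split 2 = 1" "example_part_split 3 = 2"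
      "example_part_split 0 = 3" "{0, 1, 2, 3} \<subseteq> {..<n}"
      using n by (auto simp: example_part_split_def example_part_def)
    then show "{0, 1, 2, 3} \<subseteq> example_part_split ` {..<n}"
      by (metis empty_subsetI insert_subset rev_image_eqI)
  qed
  then show ?thesis
    unfolding H.mean_length_def H.norm_const_def H.load_def
    by (simp add: masses power2_eq_square)
qed

lemma add_edge_example: "add_edge G.edge 0 1 = H.edge"
  using n by (auto simp: add_edge_def G.edge_def H.edge_def example_part_split_def example_part_def fun_eq_iff)

end

theorem mainTheorem10:
  fixes n :: nat
  assumes "n \<ge> 4"
  shows "\<exists>(E :: nat \<Rightarrow> nat \<Rightarrow> bool) (i\<^sub>0 :: nat) (j\<^sub>0 :: nat) (\<alpha> :: nat \<Rightarrow> real).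
           connected_graph {..<n} E \<and>
           i\<^sub>0 \<in> {..<n} \<and> j\<^sub>0 \<in> {..<n} \<and> i\<^sub>0 \<noteq> j\<^sub>0 \<and> \<not> E i\<^sub>0 j\<^sub>0 \<and>
           arrival_dist {..<n} \<alpha> \<and> stable {..<n} E \<alpha> \<and>
           (\<exists>\<pi> \<pi>'. fcfs_stationary {..<n} E \<alpha> \<pi> \<and>
                    fcfs_stationary {..<n} (add_edge E i\<^sub>0 j\<^sub>0) \<alpha> \<pi>' \<and>
                    mean_items \<pi>' > mean_items \<pi>)"
proof -
  interpret G: complete_multipartite_model "{..<n}" example_part "example_arrivals n"
    using assms by (rule example_model)
  interpret H: complete_multipartite_model "{..<n}" example_part_split "example_arrivals n"
    using assms by (rule example_split_model)
  show ?thesis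
  proof (intro exI conjI)
    show "connected_graph {..<n} G.edge"
      using assms by (intro G.connected_graph[of 0 2]) (auto simp: example_part_def)
    show "(0::nat) \<in> {..<n}" "(1::nat) \<in> {..<n}" "(0::nat) \<noteq> 1"
      using assms by auto
    show "\<not> G.edge 0 1"
      by (simp add: G.edge_def example_part_def)
    show "arrival_dist {..<n} (example_arrivals n)" "stable {..<n} G.edge (example_arrivals n)"
      by (fact G.arrivals G.stable)+
    show "fcfs_stationary {..<n} G.edge (example_arrivals n) G.stat_dist"
      by (rule G.fcfs_stationary_stat_dist)
    show "fcfs_stationary {..<n} (add_edge G.edge 0 1) (example_arrivals n) H.stat_dist"
      unfolding add_edge_example[OF assms] by (rule H.fcfs_stationary_stat_dist)
    show "mean_items G.stat_dist < mean_items H.stat_dist"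
      using example_mean_length[OF assms] example_split_mean_length[OF assms]
      by (simp add: G.mean_items_stat_dist H.mean_items_stat_dist ennreal_less_iff)
  qed
qed

end
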